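(* Let $p\ge1$, $m=2p$, $j=\mathrm{diag}(I_p,-I_p)$, $n>0$. Let $A$ be an $n\times n$ matrix with $\det A\neq0$, $S_0$ an $n\times n$ matrix and $\Pi_0$ an $n\times m$ matrix with $AS_0-S_0A^*=i\Pi_0j\Pi_0^*$. Define for $k\ge0$ $$\Pi_{k+1}=\Pi_k+iA^{-1}\Pi_kj,\qquad S_{k+1}=S_k+A^{-1}S_k(A^* )^{-1}+A^{-1}\Pi_k\Pi_k^*(A^* )^{-1}.$$ If $S_0>0$, then $S_k>0$ for all $k\ge0$ and $C_k:=I_m+\Pi_k^*S_k^{-1}\Pi_k-\Pi_{k+1}^*S_{k+1}^{-1}\Pi_{k+1}>0$ for all $k\ge0$.
   Context: $I_r$ denotes the $r\times r$ identity matrix; $>0$ means positive definite. *)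

theory Defs
  imports "HOL-Analysis.Analysis"
begin

definition cadj :: "complex^'n^'m \<Rightarrow> complex^'m^'n" where
  "cadj M = (\<chi> i k. cnj (M $ k $ i))"

definition cscale :: "complex \<Rightarrow> complex^'n^'m \<Rightarrow> complex^'n^'m" where
  "cscale c M = (\<chi> i k. c * M $ i $ k)"

definition pos_def :: "complex^'n^'n \<Rightarrow> bool" where
  "pos_def S \<longleftrightarrow> cadj S = S \<and>
     (\<forall>x::complex^'n. x \<noteq> 0 \<longrightarrow> 0 < Re (\<Sum>i\<in>UNIV. \<Sum>k\<in>UNIV. cnj (x $ i) * S $ i $ k * x $ k))"

text \<open>j = diag(I_p, -I_p), indices of the m = 2p block split as 'p + 'p.\<close>
definition jmat :: "complex^('p::finite + 'p)^('p + 'p)" where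
  "jmat = (\<chi> a b. if a = b then (case a of Inl _ \<Rightarrow> 1 | Inr _ \<Rightarrow> -1) else 0)"

end

theory Submission
  imports Defs
begin

text \<open>
  The recursion for \<open>S\<close> adds to \<open>S\<^sub>k\<close> the congruent copy \<open>A\<^sup>-\<^sup>1 S\<^sub>k A\<^sup>-\<^sup>*\<close> and the
  Gram matrix of \<open>\<Pi>\<^sub>k\<^sup>* A\<^sup>-\<^sup>*\<close>, so positivity propagates.
  For \<open>C\<^sub>k\<close> one completes the square: writing \<open>a = \<Pi>\<^sub>k y\<close>, \<open>v = \<Pi>\<^sub>k\<^sub>+\<^sub>1 y\<close> and
  \<open>x = -S\<^sub>k\<^sub>+\<^sub>1\<^sup>-\<^sup>1 v\<close>, one has \<open>-v\<^sup>* S\<^sub>k\<^sub>+\<^sub>1\<^sup>-\<^sup>1 v = x\<^sup>* S\<^sub>k\<^sub>+\<^sub>1 x + 2 Re (x\<^sup>* v)\<close>, and expanding gives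
  \<open>y\<^sup>* C\<^sub>k y = z\<^sup>* S\<^sub>k\<^sup>-\<^sup>1 z + w\<^sup>* S\<^sub>k w + |\<Pi>\<^sub>k\<^sup>* w + i j y|\<^sup>2\<close> with \<open>z = S\<^sub>k x + a\<close>, \<open>w = A\<^sup>-\<^sup>* x\<close>.
  All three terms are nonnegative, and the last two cannot both vanish for \<open>y \<noteq> 0\<close> because
  \<open>j\<close> is unitary.
\<close>

lemma matrix_inv_unique:
  fixes A X :: "'a::field^'n^'n"
  assumes "A ** X = mat 1"
  shows "matrix_inv A = X"
proof -
  have XA: "X ** A = mat 1"
    using assms matrix_left_right_inverse by blast
  have "A ** matrix_inv A = mat 1 \<and> matrix_inv A ** A = mat 1"
    unfolding matrix_inv_def by (rule someI[of _ X]) (use assms XA in auto)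
  then have "matrix_inv A ** A ** X = X"
    by simp
  then show ?thesis
    by (simp add: assms flip: matrix_mul_assoc)
qed

lemma matrix_inv_right:
  fixes A :: "'a::field^'n^'n"
  assumes "invertible A"
  shows "A ** matrix_inv A = mat 1"
  using assms matrix_inv_unique unfolding invertible_def by metis

lemma matrix_inv_left:
  fixes A :: "'a::field^'n^'n"
  assumes "invertible A"
  shows "matrix_inv A ** A = mat 1"
  using matrix_inv_right[OF assms] matrix_left_right_inverse by blast

lemma cadj_cadj [simp]: "cadj (cadj M) = M"
  by (simp add: cadj_def vec_eq_iff)

lemma cadj_add: "cadj (M + N) = cadj M + cadj N"
  by (simp add: cadj_def vec_eq_iff)

lemma cadj_diff: "cadj (M - N) = cadj M - cadj N"
  by (simp add: cadj_def vec_eq_iff)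

lemma cadj_matrix_mult: "cadj (M ** N) = cadj N ** cadj M"
  by (simp add: cadj_def vec_eq_iff matrix_matrix_mult_def mult.commute)

lemma cadj_mat_1 [simp]: "cadj (mat 1 :: complex^'n^'n) = mat 1"
  by (simp add: cadj_def vec_eq_iff mat_def)

lemma cadj_matrix_inv:
  fixes A :: "complex^'n^'n"
  assumes "invertible A"
  shows "matrix_inv (cadj A) = cadj (matrix_inv A)"
proof (rule matrix_inv_unique)
  show "cadj A ** cadj (matrix_inv A) = mat 1"
    using matrix_inv_left[OF assms] by (metis cadj_matrix_mult cadj_mat_1)
qed

lemma matrix_vector_mult_cscale: "cscale c M *v x = c *s (M *v x)"
  by (simp add: cscale_def vec_eq_iff matrix_vector_mult_def sum_distrib_left mult.assoc)

lemma cadj_jmat: "cadj jmat = jmat"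
  by (auto simp: cadj_def jmat_def vec_eq_iff split: sum.split)

lemma jmat_unitary: "cadj jmat ** (jmat :: complex^('p::finite + 'p)^('p + 'p)) = mat 1"
proof -
  have "(\<Sum>k\<in>UNIV. (jmat :: complex^('p + 'p)^('p + 'p)) $ i $ k * jmat $ k $ l)
          = jmat $ i $ i * jmat $ i $ l" for i l
    by (subst sum.remove[of _ i]) (auto simp: jmat_def intro!: sum.neutral)
  moreover have "(jmat :: complex^('p + 'p)^('p + 'p)) $ i $ i * jmat $ i $ l = mat 1 $ i $ l" for i l
    by (auto simp: mat_def jmat_def split: sum.split)
  ultimately show ?thesis
    by (simp add: cadj_jmat matrix_matrix_mult_def vec_eq_iff)
qed

definition cinner :: "complex^'n \<Rightarrow> complex^'n \<Rightarrow> complex" where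
  "cinner x y = (\<Sum>i\<in>UNIV. cnj (x $ i) * y $ i)"

lemma cinner_add_left: "cinner (x + y) z = cinner x z + cinner y z"
  by (simp add: cinner_def sum.distrib distrib_right)

lemma cinner_add_right: "cinner z (x + y) = cinner z x + cinner z y"
  by (simp add: cinner_def sum.distrib distrib_left)

lemma cinner_diff_right: "cinner z (x - y) = cinner z x - cinner z y"
  by (simp add: cinner_def sum_subtractf right_diff_distrib)

lemma cinner_minus_left: "cinner (- x) z = - cinner x z"
  by (simp add: cinner_def sum_negf)

lemma cinner_minus_right: "cinner z (- x) = - cinner z x"
  by (simp add: cinner_def sum_negf)

lemma cinner_scale_left: "cinner (c *s x) z = cnj c * cinner x z"
  by (simp add: cinner_def sum_distrib_left mult.assoc)

lemma cinner_scale_right: "cinner z (c *s x) = c * cinner z x"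
  by (simp add: cinner_def sum_distrib_left mult.left_commute)

lemma cinner_matrix_vector_mult_right: "cinner x (M *v y) = cinner (cadj M *v x) y"
proof -
  have "cinner x (M *v y) = (\<Sum>i\<in>UNIV. \<Sum>k\<in>UNIV. cnj (x $ i) * M $ i $ k * y $ k)"
    by (simp add: cinner_def matrix_vector_mult_def sum_distrib_left mult.assoc)
  also have "\<dots> = (\<Sum>k\<in>UNIV. \<Sum>i\<in>UNIV. cnj (x $ i) * M $ i $ k * y $ k)"
    by (rule sum.swap)
  also have "\<dots> = cinner (cadj M *v x) y"
    by (simp add: cinner_def matrix_vector_mult_def cadj_def sum_distrib_left sum_distrib_right
        mult.commute mult.left_commute)
  finally show ?thesis .
qed

lemma cinner_matrix_vector_mult_left: "cinner (M *v x) y = cinner x (cadj M *v y)"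
  by (simp add: cinner_matrix_vector_mult_right)

lemma cinner_congruence: "cinner y ((cadj P ** M ** P) *v y) = cinner (P *v y) (M *v (P *v y))"
  by (simp add: cinner_matrix_vector_mult_right flip: matrix_vector_mul_assoc)

lemma Re_cinner_self: "Re (cinner x x) = (\<Sum>i\<in>UNIV. (cmod (x $ i))\<^sup>2)"
  by (simp add: cinner_def cmod_power2 flip: power2_eq_square)

lemma Re_cinner_self_nonneg: "Re (cinner x x) \<ge> 0"
  by (simp add: Re_cinner_self sum_nonneg)

lemma Re_cinner_self_pos:
  assumes "x \<noteq> 0"
  shows "Re (cinner x x) > 0"
proof -
  obtain i where "x $ i \<noteq> 0"
    using assms by (metis vec_eq_iff zero_index)
  then show ?thesis
    unfolding Re_cinner_self by (intro sum_pos2[where i = i]) auto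
qed

lemma pos_def_iff_cinner:
  "pos_def S \<longleftrightarrow> cadj S = S \<and> (\<forall>x. x \<noteq> 0 \<longrightarrow> Re (cinner x (S *v x)) > 0)"
  by (simp add: pos_def_def cinner_def matrix_vector_mult_def sum_distrib_left mult.assoc)

lemma pos_def_hermitian: "pos_def S \<Longrightarrow> cadj S = S"
  by (simp add: pos_def_iff_cinner)

lemma pos_def_pos: "pos_def S \<Longrightarrow> x \<noteq> 0 \<Longrightarrow> Re (cinner x (S *v x)) > 0"
  by (simp add: pos_def_iff_cinner)

lemma pos_def_nonneg: "pos_def S \<Longrightarrow> Re (cinner x (S *v x)) \<ge> 0"
  by (cases "x = 0") (auto simp: cinner_def dest: pos_def_pos[of S x])

lemma pos_def_invertible:
  assumes "pos_def S"
  shows "invertible S"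
proof -
  have "x = 0" if "S *v x = 0" for x
    using pos_def_pos[OF assms, of x] that by (auto simp: cinner_def)
  then show ?thesis
    by (simp add: invertible_left_inverse matrix_left_invertible_ker)
qed

lemma pos_def_matrix_inv_hermitian:
  assumes "pos_def S"
  shows "cadj (matrix_inv S) = matrix_inv S"
  using cadj_matrix_inv[OF pos_def_invertible[OF assms]] pos_def_hermitian[OF assms] by simp

lemma cinner_update:
  fixes S B :: "complex^'n^'n" and P :: "complex^'m^'n"
  assumes "cadj S = S"
  shows "cinner x ((S + B ** S ** cadj B + B ** P ** cadj P ** cadj B) *v x)
     = cinner x (S *v x) + cinner (cadj B *v x) (S *v (cadj B *v x))
       + cinner (cadj P *v (cadj B *v x)) (cadj P *v (cadj B *v x))"
  by (simp add: matrix_vector_mult_add_rdistrib cinner_add_right cinner_matrix_vector_mult_right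
      flip: matrix_vector_mul_assoc)

lemma pos_def_update:
  fixes S B :: "complex^'n^'n" and P :: "complex^'m^'n"
  assumes S: "pos_def S"
  shows "pos_def (S + B ** S ** cadj B + B ** P ** cadj P ** cadj B)"
  unfolding pos_def_iff_cinner
proof (intro conjI allI impI)
  have "cadj S = S"
    using S by (rule pos_def_hermitian)
  then show "cadj (S + B ** S ** cadj B + B ** P ** cadj P ** cadj B)
      = S + B ** S ** cadj B + B ** P ** cadj P ** cadj B"
    by (simp add: cadj_add cadj_matrix_mult matrix_mul_assoc)
  fix x :: "complex^'n"
  assume "x \<noteq> 0"
  then show "Re (cinner x ((S + B ** S ** cadj B + B ** P ** cadj P ** cadj B) *v x)) > 0"
    unfolding cinner_update[OF \<open>cadj S = S\<close>]
    using pos_def_pos[OF S \<open>x \<noteq> 0\<close>] pos_def_nonneg[OF S, of "cadj B *v x"]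
      Re_cinner_self_nonneg[of "cadj P *v (cadj B *v x)"]
    by simp
qed

subsection \<open>Completing the square\<close>

lemma cinner_complete_square:
  fixes S :: "complex^'n^'n" and v :: "complex^'n"
  assumes "pos_def S"
  defines "x \<equiv> - (matrix_inv S *v v)"
  shows "cinner x (S *v x) + cinner x v + cinner v x = - cinner v (matrix_inv S *v v)"
proof -
  have "S *v x = - v"
    using matrix_inv_right[OF pos_def_invertible[OF assms(1)]]
    by (simp add: x_def vec.neg matrix_vector_mul_assoc)
  moreover have "cinner x v = - cinner v (matrix_inv S *v v)"
    by (simp add: x_def cinner_minus_left cinner_matrix_vector_mult_left
        pos_def_matrix_inv_hermitian[OF assms(1)])
  ultimately show ?thesis
    by (simp add: x_def cinner_minus_right)
qed

lemma cinner_update_expansion: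
  fixes S B :: "complex^'n^'n" and P :: "complex^'m^'n" and J :: "complex^'m^'m"
    and x :: "complex^'n" and y :: "complex^'m"
  assumes S: "pos_def S" and J: "cadj J ** J = mat 1"
    and S': "S' = S + B ** S ** cadj B + B ** P ** cadj P ** cadj B"
    and P': "P' = P + cscale \<i> (B ** P ** J)"
  defines "w \<equiv> cadj B *v x"
  shows "cinner x (S' *v x) + cinner x (P' *v y) + cinner (P' *v y) x + cinner y y
           + cinner (P *v y) (matrix_inv S *v (P *v y))
       = cinner (S *v x + P *v y) (matrix_inv S *v (S *v x + P *v y)) + cinner w (S *v w)
           + cinner (cadj P *v w + \<i> *s (J *v y)) (cadj P *v w + \<i> *s (J *v y))"
proof -
  define a where "a = P *v y"
  define g where "g = B *v (P *v (J *v y))"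
  have S_hermitian: "cadj S = S"
    using S by (rule pos_def_hermitian)
  have S_inv: "matrix_inv S ** S = mat 1" "S ** matrix_inv S = mat 1"
    using pos_def_invertible[OF S] by (simp_all add: matrix_inv_left matrix_inv_right)
  have S'_form: "cinner x (S' *v x)
      = cinner x (S *v x) + cinner w (S *v w) + cinner (cadj P *v w) (cadj P *v w)"
    unfolding S' w_def by (rule cinner_update[OF S_hermitian])
  have v: "P' *v y = a + \<i> *s g"
    by (simp add: P' a_def g_def matrix_vector_mult_add_rdistrib matrix_vector_mult_cscale
        matrix_vector_mul_assoc matrix_mul_assoc)
  have v_forms: "cinner x (P' *v y) = cinner x a + \<i> * cinner x g"
      "cinner (P' *v y) x = cinner a x - \<i> * cinner g x"
    by (simp_all add: v cinner_add_left cinner_add_right cinner_scale_left cinner_scale_right)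
  have z_form: "cinner (S *v x + a) (matrix_inv S *v (S *v x + a))
      = cinner x (S *v x) + cinner x a + cinner a x + cinner a (matrix_inv S *v a)"
    by (simp add: matrix_vector_right_distrib matrix_vector_mul_assoc S_inv cinner_add_left
        cinner_add_right cinner_matrix_vector_mult_left[of S] S_hermitian)
  have "cinner (cadj P *v w) (J *v y) = cinner x g" "cinner (J *v y) (cadj P *v w) = cinner g x"
    by (simp_all add: cinner_matrix_vector_mult_left w_def g_def)
  moreover have "cinner (J *v y) (J *v y) = cinner y y"
    by (simp add: cinner_matrix_vector_mult_left matrix_vector_mul_assoc J)
  ultimately have t_form: "cinner (cadj P *v w + \<i> *s (J *v y)) (cadj P *v w + \<i> *s (J *v y))
      = cinner (cadj P *v w) (cadj P *v w) + \<i> * cinner x g - \<i> * cinner g x + cinner y y"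
    by (simp add: cinner_add_left cinner_add_right cinner_scale_left cinner_scale_right
        right_diff_distrib)
  show ?thesis
    unfolding a_def[symmetric] S'_form v_forms z_form t_form by algebra
qed

lemma cinner_C_decomposition:
  fixes S B :: "complex^'n^'n" and P :: "complex^'m^'n" and J :: "complex^'m^'m"
    and x :: "complex^'n" and y :: "complex^'m"
  assumes S: "pos_def S" and J: "cadj J ** J = mat 1"
    and S': "S' = S + B ** S ** cadj B + B ** P ** cadj P ** cadj B"
    and P': "P' = P + cscale \<i> (B ** P ** J)"
    and x: "x = - (matrix_inv S' *v (P' *v y))"
  defines "w \<equiv> cadj B *v x"
  shows "cinner y ((mat 1 + cadj P ** matrix_inv S ** P - cadj P' ** matrix_inv S' ** P') *v y)
       = cinner (S *v x + P *v y) (matrix_inv S *v (S *v x + P *v y)) + cinner w (S *v w)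
           + cinner (cadj P *v w + \<i> *s (J *v y)) (cadj P *v w + \<i> *s (J *v y))"
proof -
  have S'_pos: "pos_def S'"
    unfolding S' using S by (rule pos_def_update)
  have "cinner y ((mat 1 + cadj P ** matrix_inv S ** P - cadj P' ** matrix_inv S' ** P') *v y)
      = cinner y y + cinner (P *v y) (matrix_inv S *v (P *v y))
          - cinner (P' *v y) (matrix_inv S' *v (P' *v y))"
    by (simp add: matrix_vector_mult_add_rdistrib matrix_vector_mult_diff_rdistrib
        cinner_add_right cinner_diff_right cinner_congruence)
  then show ?thesis
    using cinner_update_expansion[OF S J S' P', of x y, folded w_def]
      cinner_complete_square[OF S'_pos, of "P' *v y", folded x]
    by algebra
qed

lemma pos_def_C:
  fixes S B :: "complex^'n^'n" and P :: "complex^'m^'n" and J :: "complex^'m^'m"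
  assumes S: "pos_def S" and J: "cadj J ** J = mat 1"
    and S': "S' = S + B ** S ** cadj B + B ** P ** cadj P ** cadj B"
    and P': "P' = P + cscale \<i> (B ** P ** J)"
  shows "pos_def (mat 1 + cadj P ** matrix_inv S ** P - cadj P' ** matrix_inv S' ** P')"
  unfolding pos_def_iff_cinner
proof (intro conjI allI impI)
  have S'_pos: "pos_def S'"
    unfolding S' using S by (rule pos_def_update)
  show "cadj (mat 1 + cadj P ** matrix_inv S ** P - cadj P' ** matrix_inv S' ** P')
      = mat 1 + cadj P ** matrix_inv S ** P - cadj P' ** matrix_inv S' ** P'"
    by (simp add: cadj_add cadj_diff cadj_matrix_mult matrix_mul_assoc
        pos_def_matrix_inv_hermitian[OF S] pos_def_matrix_inv_hermitian[OF S'_pos])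
  fix y :: "complex^'m"
  assume "y \<noteq> 0"
  define x where "x = - (matrix_inv S' *v (P' *v y))"
  define z where "z = S *v x + P *v y"
  define w where "w = cadj B *v x"
  define t where "t = cadj P *v w + \<i> *s (J *v y)"
  note form = cinner_C_decomposition[OF S J S' P' x_def, folded z_def w_def, folded t_def]
  have "cinner z (matrix_inv S *v z) = cinner (matrix_inv S *v z) (S *v (matrix_inv S *v z))"
    by (simp add: matrix_vector_mul_assoc matrix_inv_right pos_def_invertible[OF S]
        cinner_matrix_vector_mult_left pos_def_matrix_inv_hermitian[OF S])
  then have z_nonneg: "Re (cinner z (matrix_inv S *v z)) \<ge> 0"
    using pos_def_nonneg[OF S] by simp
  have "Re (cinner w (S *v w)) > 0 \<or> Re (cinner t t) > 0"
  proof (cases "w = 0")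
    case True
    have "J *v y \<noteq> 0"
      using \<open>y \<noteq> 0\<close> J
      by (metis matrix_vector_mul_assoc matrix_vector_mul_lid matrix_vector_mult_0_right)
    moreover have "t = \<i> *s (J *v y)"
      using True by (simp add: t_def)
    ultimately have "t \<noteq> 0"
      by (simp add: vec_eq_iff)
    then show ?thesis
      using Re_cinner_self_pos by blast
  qed (use pos_def_pos[OF S] in blast)
  then show
    "Re (cinner y ((mat 1 + cadj P ** matrix_inv S ** P - cadj P' ** matrix_inv S' ** P') *v y)) > 0"
    unfolding form using z_nonneg pos_def_nonneg[OF S, of w] Re_cinner_self_nonneg[of t] by auto
qed

theorem proposition3p1:
  fixes A :: "complex^'n^'n"
    and S :: "nat \<Rightarrow> complex^'n^'n"
    and Pi :: "nat \<Rightarrow> complex^('p::finite + 'p)^'n"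
  assumes detA: "det A \<noteq> 0"
    and identity: "A ** S 0 - S 0 ** cadj A = cscale \<i> (Pi 0 ** jmat ** cadj (Pi 0))"
    and Pi_rec: "\<And>k. Pi (Suc k) = Pi k + cscale \<i> (matrix_inv A ** Pi k ** jmat)"
    and S_rec: "\<And>k. S (Suc k) = S k + matrix_inv A ** S k ** matrix_inv (cadj A)
                   + matrix_inv A ** Pi k ** cadj (Pi k) ** matrix_inv (cadj A)"
    and S0pos: "pos_def (S 0)"
  shows "\<forall>k. pos_def (S k) \<and>
           pos_def (mat 1 + cadj (Pi k) ** matrix_inv (S k) ** Pi k
                    - cadj (Pi (Suc k)) ** matrix_inv (S (Suc k)) ** Pi (Suc k))"
proof -
  define B where "B = matrix_inv A"
  have "matrix_inv (cadj A) = cadj B"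
    unfolding B_def using detA by (simp add: cadj_matrix_inv invertible_det_nz)
  then have S_rec': "S (Suc k) = S k + B ** S k ** cadj B + B ** Pi k ** cadj (Pi k) ** cadj B" for k
    using S_rec unfolding B_def by simp
  have S_pos: "pos_def (S k)" for k
    by (induction k) (simp_all add: S0pos S_rec' pos_def_update)
  show ?thesis
    using S_pos pos_def_C[OF S_pos jmat_unitary S_rec'] Pi_rec unfolding B_def by blast
qed

end
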